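(* Let $I$ be a countable set with $|I|\ge 2$, let $\mathfrak{M}_i=(S_i,\mathcal{L}_i)$ be partial linear spaces for $i\in I$, let $\mathfrak{M}=\bigotimes_{i\in I}\mathfrak{M}_i$ with point set $S=\prod_{i\in I}S_i$, and for each $i$ let $\mathcal{H}_i^{\mathrm{all}}$ denote the family consisting of all hyperplanes of $\mathfrak{M}_i$ together with the set $S_i$. For $\mathcal{H}\subseteq S$ the following are equivalent: (1) $\mathcal{H}$ is a hyperplane of $\mathfrak{M}$; (2) for all $a\in S$ and $i\in I$ we have $\mathcal{H}^{[a]}_i\in\mathcal{H}_i^{\mathrm{all}}$, and there exist $a\in S$, $i\in I$ with $\mathcal{H}^{[a]}_i\neq S_i$.
   Context: A partial linear space is a pair $(S,\mathcal{L})$ with $\mathcal{L}$ a family of subsets of $S$ (lines) such that every line has at least two points, every point lies on a line, and two distinct lines share at most one point. A subspace is a set $X$ such that any line meeting $X$ in at least two points is contained in $X$; a hyperplane is a proper subspace meeting every line. Segre product: for $a\in S=\prod_{i\in I}S_i$, $i\in I$ and $x\in S_i$, $a[i/x]$ denotes $a$ with its $i$-th coordinate replaced by $x$, and for $A\subseteq S_i$, $a[i/A]=\{a[i/x]:x\in A\}$. The Segre product $\bigotimes_{i\in I}\mathfrak{M}_i$ has point set $S$ and lines $a[i/l]$ for $a\in S$, $i\in I$, $l\in\mathcal{L}_i$. For $\mathcal{H}\subseteq S$, $a\in S$, $i\in I$: $\mathcal{H}^{[a]}_i=\{x\in S_i: a[i/x]\in\mathcal{H}\}$. *)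

theory Defs
  imports "HOL-Library.FuncSet" "HOL-Library.Countable_Set"
begin

definition partial_linear_space :: "'a set \<Rightarrow> 'a set set \<Rightarrow> bool" where
  "partial_linear_space S L \<longleftrightarrow>
     (\<forall>l\<in>L. l \<subseteq> S \<and> (\<exists>x y. x \<in> l \<and> y \<in> l \<and> x \<noteq> y)) \<and>
     (\<forall>p\<in>S. \<exists>l\<in>L. p \<in> l) \<and>
     (\<forall>l\<in>L. \<forall>m\<in>L. l \<noteq> m \<longrightarrow> (\<forall>x y. x \<in> l \<inter> m \<and> y \<in> l \<inter> m \<longrightarrow> x = y))"

definition subspace_pls :: "'a set \<Rightarrow> 'a set set \<Rightarrow> 'a set \<Rightarrow> bool" where
  "subspace_pls S L X \<longleftrightarrow> X \<subseteq> S \<and>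
     (\<forall>l\<in>L. (\<exists>x y. x \<noteq> y \<and> x \<in> l \<inter> X \<and> y \<in> l \<inter> X) \<longrightarrow> l \<subseteq> X)"

definition hyperplane_pls :: "'a set \<Rightarrow> 'a set set \<Rightarrow> 'a set \<Rightarrow> bool" where
  "hyperplane_pls S L H \<longleftrightarrow> subspace_pls S L H \<and> H \<noteq> S \<and> (\<forall>l\<in>L. l \<inter> H \<noteq> {})"

text \<open>Segre product: points are the (extensional) elements of PiE I S;
  lines are a[i/l] for a a point, i in I, l a line of the i-th factor.\<close>
definition segre_lines :: "'i set \<Rightarrow> ('i \<Rightarrow> 'a set) \<Rightarrow> ('i \<Rightarrow> 'a set set) \<Rightarrow> ('i \<Rightarrow> 'a) set set" where
  "segre_lines I S L = {(\<lambda>x. a(i := x)) ` l | a i l. a \<in> PiE I S \<and> i \<in> I \<and> l \<in> L i}"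

definition segre_section :: "('i \<Rightarrow> 'a set) \<Rightarrow> ('i \<Rightarrow> 'a) set \<Rightarrow> ('i \<Rightarrow> 'a) \<Rightarrow> 'i \<Rightarrow> 'a set" where
  "segre_section S H a i = {x \<in> S i. a(i := x) \<in> H}"

end

theory Submission
  imports Defs
begin

text \<open>A set is a hyperplane or the whole point set exactly when it is a subspace meeting every
  line. The Segre line through \<open>a\<close> in direction \<open>i\<close> is the injective image of a line \<open>l\<close> of
  the \<open>i\<close>-th factor under \<open>x \<mapsto> a[i/x]\<close>, and this map carries \<open>l \<inter> H\<^sup>[\<^sup>a\<^sup>]\<^sub>i\<close> onto the
  trace of \<open>H\<close> on that line; so \<open>H\<close> is a subspace meeting every line iff all its sections are.
  Finally \<open>H\<close> is proper iff some section is, since a point outside \<open>H\<close> lies outside each of its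
  own sections.\<close>

lemma partial_linear_space_lineD:
  assumes "partial_linear_space S L" and "l \<in> L"
  shows "l \<subseteq> S" and "l \<noteq> {}"
  using assms unfolding partial_linear_space_def by blast+

lemma hyperplane_or_whole_iff:
  assumes "\<forall>l\<in>L. l \<subseteq> S \<and> l \<noteq> {}"
  shows "hyperplane_pls S L X \<or> X = S \<longleftrightarrow> subspace_pls S L X \<and> (\<forall>l\<in>L. l \<inter> X \<noteq> {})"
  using assms unfolding hyperplane_pls_def subspace_pls_def by blast

lemma fun_upd_PiE:
  "a \<in> PiE I S \<Longrightarrow> i \<in> I \<Longrightarrow> x \<in> S i \<Longrightarrow> a(i := x) \<in> PiE I S"
  by (auto simp: PiE_def extensional_def)

lemma inj_fun_upd_at: "inj (\<lambda>x. a(i := x))"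
  by (rule injI) (metis fun_upd_same)

lemma segre_line_inter:
  assumes "l \<subseteq> S i"
  shows "(\<lambda>x. a(i := x)) ` l \<inter> H = (\<lambda>x. a(i := x)) ` (l \<inter> segre_section S H a i)"
  using assms by (auto simp: segre_section_def)

lemma segre_line_subset_iff:
  assumes "l \<subseteq> S i"
  shows "(\<lambda>x. a(i := x)) ` l \<subseteq> H \<longleftrightarrow> l \<subseteq> segre_section S H a i"
  using assms by (auto simp: segre_section_def)

lemma two_points_image_iff:
  assumes "inj f"
  shows "(\<exists>u v. u \<noteq> v \<and> u \<in> f ` A \<and> v \<in> f ` A) \<longleftrightarrow> (\<exists>x y. x \<noteq> y \<and> x \<in> A \<and> y \<in> A)"
proof
  assume "\<exists>u v. u \<noteq> v \<and> u \<in> f ` A \<and> v \<in> f ` A"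
  then obtain x y where "x \<in> A" "y \<in> A" "f x \<noteq> f y" by blast
  moreover from \<open>f x \<noteq> f y\<close> have "x \<noteq> y" by blast
  ultimately show "\<exists>x y. x \<noteq> y \<and> x \<in> A \<and> y \<in> A" by blast
next
  assume "\<exists>x y. x \<noteq> y \<and> x \<in> A \<and> y \<in> A"
  then show "\<exists>u v. u \<noteq> v \<and> u \<in> f ` A \<and> v \<in> f ` A" using assms by (blast dest: injD)
qed

lemma ball_segre_lines_iff:
  "(\<forall>m\<in>segre_lines I S L. P m) \<longleftrightarrow>
    (\<forall>a\<in>PiE I S. \<forall>i\<in>I. \<forall>l\<in>L i. P ((\<lambda>x. a(i := x)) ` l))"
  unfolding segre_lines_def by blast

lemma subspace_segre_iff:
  assumes lines: "\<forall>i\<in>I. \<forall>l\<in>L i. l \<subseteq> S i" and "H \<subseteq> PiE I S"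
  shows "subspace_pls (PiE I S) (segre_lines I S L) H \<longleftrightarrow>
    (\<forall>a\<in>PiE I S. \<forall>i\<in>I. subspace_pls (S i) (L i) (segre_section S H a i))"
proof -
  have line_condition:
    "((\<exists>u v. u \<noteq> v \<and> u \<in> (\<lambda>x. a(i := x)) ` l \<inter> H \<and> v \<in> (\<lambda>x. a(i := x)) ` l \<inter> H)
        \<longrightarrow> (\<lambda>x. a(i := x)) ` l \<subseteq> H) \<longleftrightarrow>
     ((\<exists>x y. x \<noteq> y \<and> x \<in> l \<inter> segre_section S H a i \<and> y \<in> l \<inter> segre_section S H a i)
        \<longrightarrow> l \<subseteq> segre_section S H a i)"
    if "i \<in> I" "l \<in> L i" for a i l
  proof -
    have "l \<subseteq> S i" using lines that by blast
    then show ?thesis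
      using two_points_image_iff[OF inj_fun_upd_at, of a i "l \<inter> segre_section S H a i"]
      by (simp add: segre_line_inter segre_line_subset_iff)
  qed
  have "segre_section S H a i \<subseteq> S i" for a i
    by (auto simp: segre_section_def)
  then show ?thesis
    using assms(2) unfolding subspace_pls_def ball_segre_lines_iff
    by (simp only: line_condition cong: ball_cong) simp
qed

lemma segre_meets_lines_iff:
  assumes "\<forall>i\<in>I. \<forall>l\<in>L i. l \<subseteq> S i"
  shows "(\<forall>m\<in>segre_lines I S L. m \<inter> H \<noteq> {}) \<longleftrightarrow>
    (\<forall>a\<in>PiE I S. \<forall>i\<in>I. \<forall>l\<in>L i. l \<inter> segre_section S H a i \<noteq> {})"
proof -
  have "(\<lambda>x. a(i := x)) ` l \<inter> H \<noteq> {} \<longleftrightarrow> l \<inter> segre_section S H a i \<noteq> {}"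
    if "i \<in> I" "l \<in> L i" for a i l
  proof -
    have "l \<subseteq> S i" using that assms by blast
    then show ?thesis by (simp add: segre_line_inter)
  qed
  then show ?thesis unfolding ball_segre_lines_iff by simp
qed

lemma segre_proper_iff:
  assumes "I \<noteq> {}" and "H \<subseteq> PiE I S"
  shows "H \<noteq> PiE I S \<longleftrightarrow> (\<exists>a\<in>PiE I S. \<exists>i\<in>I. segre_section S H a i \<noteq> S i)"
proof
  assume "H \<noteq> PiE I S"
  then obtain b where b: "b \<in> PiE I S" "b \<notin> H" using assms(2) by blast
  obtain i where i: "i \<in> I" using assms(1) by blast
  have "b i \<in> S i - segre_section S H b i" using b i by (auto simp: segre_section_def)
  then show "\<exists>a\<in>PiE I S. \<exists>i\<in>I. segre_section S H a i \<noteq> S i" using b i by blast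
next
  assume "\<exists>a\<in>PiE I S. \<exists>i\<in>I. segre_section S H a i \<noteq> S i"
  then obtain a i where "a \<in> PiE I S" "i \<in> I" "segre_section S H a i \<noteq> S i" by blast
  then have "\<not> PiE I S \<subseteq> H" by (auto simp: segre_section_def dest: fun_upd_PiE)
  then show "H \<noteq> PiE I S" by blast
qed

theorem theorem3p1:
  fixes I :: "'i set" and S :: "'i \<Rightarrow> 'a set" and L :: "'i \<Rightarrow> 'a set set"
    and H :: "('i \<Rightarrow> 'a) set"
  assumes "countable I"
    and "\<exists>i\<in>I. \<exists>j\<in>I. i \<noteq> j"
    and "\<forall>i\<in>I. partial_linear_space (S i) (L i)"
    and "H \<subseteq> PiE I S"
  shows "hyperplane_pls (PiE I S) (segre_lines I S L) H \<longleftrightarrow>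
    ((\<forall>a\<in>PiE I S. \<forall>i\<in>I. hyperplane_pls (S i) (L i) (segre_section S H a i)
                              \<or> segre_section S H a i = S i) \<and>
     (\<exists>a\<in>PiE I S. \<exists>i\<in>I. segre_section S H a i \<noteq> S i))"
proof -
  have lines: "\<forall>i\<in>I. \<forall>l\<in>L i. l \<subseteq> S i \<and> l \<noteq> {}"
    using assms(3) partial_linear_space_lineD by blast
  have "I \<noteq> {}" using assms(2) by blast
  have "hyperplane_pls (PiE I S) (segre_lines I S L) H \<longleftrightarrow>
      subspace_pls (PiE I S) (segre_lines I S L) H \<and> (\<forall>m\<in>segre_lines I S L. m \<inter> H \<noteq> {})
      \<and> H \<noteq> PiE I S"
    unfolding hyperplane_pls_def by blast
  also have "\<dots> \<longleftrightarrow> (\<forall>a\<in>PiE I S. \<forall>i\<in>I. subspace_pls (S i) (L i) (segre_section S H a i)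
        \<and> (\<forall>l\<in>L i. l \<inter> segre_section S H a i \<noteq> {}))
      \<and> (\<exists>a\<in>PiE I S. \<exists>i\<in>I. segre_section S H a i \<noteq> S i)"
    using lines assms(4) \<open>I \<noteq> {}\<close>
    by (simp add: subspace_segre_iff segre_meets_lines_iff segre_proper_iff) blast
  also have "\<dots> \<longleftrightarrow> (\<forall>a\<in>PiE I S. \<forall>i\<in>I. hyperplane_pls (S i) (L i) (segre_section S H a i)
        \<or> segre_section S H a i = S i) \<and> (\<exists>a\<in>PiE I S. \<exists>i\<in>I. segre_section S H a i \<noteq> S i)"
    using lines by (simp add: hyperplane_or_whole_iff)
  finally show ?thesis .
qed

end
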